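(* Let $T\subset\mathbb{R}^3$ be a non-degenerate tetrahedron, let $\mathcal{Y}^0(T)=[\mathcal{N}_{I}^0(T)]^3\oplus[\widetilde{\mathit{P}}^1(T)\otimes\mathbb{1}]$ (a space of dimension $21$), and let $E=\mathit{U}^2(T)\setminus\mathit{P}^1(T)$ be the span of the six quadratic edge base functions. Then the sum $\mathcal{Y}^0(T)+\operatorname{dev}\mathrm{D}[E]^3$ is linearly dependent, i.e. $\dim\mathcal{Y}^0(T)+\dim\operatorname{dev}\mathrm{D}[E]^3>\dim\big(\mathcal{Y}^0(T)+\operatorname{dev}\mathrm{D}[E]^3\big)$.
   Context: $\mathit{P}^p(T)$ denotes polynomials of total degree at most $p$ on $T$, $\widetilde{\mathit{P}}^p(T)$ homogeneous polynomials of degree $p$, $\mathbb{1}$ the $3\times3$ identity matrix, and $\widetilde{\mathit{P}}^1(T)\otimes\mathbb{1}=\{q\mathbb{1}:q\in\widetilde{\mathit{P}}^1(T)\}$. The lowest order Nédélec space is $\mathcal{N}_{I}^0(T)=\operatorname{span}\{\mathbf{e}_1,\mathbf{e}_2,\mathbf{e}_3,(0,z,-y)^T,(-z,0,x)^T,(y,-x,0)^T\}$ and $[\mathcal{N}_{I}^0(T)]^3$ denotes the $3\times3$ matrix fields whose rows all lie in $\mathcal{N}_{I}^0(T)$. The quadratic $H^1$-conforming polytopal space $\mathit{U}^2(T)=\mathit{P}^2(T)$ is given by the four vertex functions (the barycentric coordinates $\lambda_1,\dots,\lambda_4$, spanning $\mathit{P}^1(T)$) and one quadratic edge function per edge (e.g.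 $\lambda_i\lambda_j$ for the edge between vertices $i<j$), each vanishing on all other edges; $E=\mathit{U}^2(T)\setminus\mathit{P}^1(T)$ is the span of these six edge functions, so $\mathit{P}^2(T)=\mathit{P}^1(T)\oplus E$. For a vector field $\mathbf{v}$, $\mathrm{D}\mathbf{v}=\mathbf{v}\otimes\nabla$ is its Jacobian matrix, $\operatorname{dev}\mathbf{P}=\mathbf{P}-\frac13(\operatorname{tr}\mathbf{P})\mathbb{1}$, and $\operatorname{dev}\mathrm{D}[E]^3=\{\operatorname{dev}\mathrm{D}\mathbf{v}:\mathbf{v}\in E^3\}$. *)

theory Defs
  imports "HOL-Analysis.Analysis" "HOL-Library.Function_Algebras"
begin

type_synonym pt = "real^3"
type_synonym mat3 = "real^3^3"
type_synonym mfield = "pt \<Rightarrow> mat3"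

definition fscale :: "real \<Rightarrow> ('a \<Rightarrow> 'b::real_vector) \<Rightarrow> ('a \<Rightarrow> 'b)" where
  "fscale c F = (\<lambda>x. c *\<^sub>R F x)"

definition fdim :: "mfield set \<Rightarrow> nat" where
  "fdim S = vector_space.dim fscale S"

definition fspan :: "('a \<Rightarrow> 'b::real_vector) set \<Rightarrow> ('a \<Rightarrow> 'b) set" where
  "fspan S = module.span fscale S"

definition onT :: "pt set \<Rightarrow> mfield \<Rightarrow> mfield" where
  "onT T F = (\<lambda>x. if x \<in> T then F x else 0)"

definition bary :: "(nat \<Rightarrow> pt) \<Rightarrow> nat \<Rightarrow> pt \<Rightarrow> real" where
  "bary a i x = (THE u. (\<forall>j. j \<ge> 4 \<longrightarrow> u j = 0) \<and> (\<Sum>j<4. u j) = 1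
                     \<and> (\<Sum>j<4. u j *\<^sub>R a j) = x) i"

definition N0 :: "(pt \<Rightarrow> pt) set" where
  "N0 = fspan {(\<lambda>p. vector [1, 0, 0]), (\<lambda>p. vector [0, 1, 0]), (\<lambda>p. vector [0, 0, 1]),
              (\<lambda>p. vector [0, p$3, - (p$2)]), (\<lambda>p. vector [- (p$3), 0, p$1]),
              (\<lambda>p. vector [p$2, - (p$1), 0])}"

definition P1hom :: "(pt \<Rightarrow> real) set" where
  "P1hom = {(\<lambda>x. c \<bullet> x) | c. True}"

definition Y0 :: "mfield set" where
  "Y0 = {(\<lambda>x. F x + q x *\<^sub>R mat 1) | F q. (\<forall>i. (\<lambda>x. F x $ i) \<in> N0) \<and> q \<in> P1hom}"

definition Eedge :: "(nat \<Rightarrow> pt) \<Rightarrow> (pt \<Rightarrow> real) set" where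
  "Eedge a = fspan {(\<lambda>x. bary a i x * bary a j x) | i j. i < j \<and> j < 4}"

text \<open>Jacobian D v = v \<otimes> \<nabla>: entry (i,j) is \<partial>v_i/\<partial>x_j.\<close>
definition Jac :: "(pt \<Rightarrow> pt) \<Rightarrow> mfield" where
  "Jac v = (\<lambda>x. \<chi> i j. frechet_derivative (\<lambda>y. v y $ i) (at x) (axis j 1))"

definition dev :: "mat3 \<Rightarrow> mat3" where
  "dev P = P - (trace P / 3) *\<^sub>R mat 1"

definition devDE :: "(nat \<Rightarrow> pt) \<Rightarrow> mfield set" where
  "devDE a = {(\<lambda>x. dev (Jac v x)) | v. \<forall>i. (\<lambda>x. v x $ i) \<in> Eedge a}"

end

theory Submission
  imports Defs
begin

(* Let lambda_0 be the barycentric coordinate of the vertex a_0 and g its (constant) gradient.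
   The field v = lambda_0 (x - a_0) has components in E, since
   lambda_0 (x_k - a_0k) = sum_(j <> 0) (a_j - a_0)_k lambda_0 lambda_j.
   Its Jacobian is lambda_0 I + (x - a_0) g^T, so dev D v = dev ((x - a_0) g^T). This differs from
   x g^T - (g . x) I by a constant plus (2/3) (g . x) I, and the rows x_k g - (g . x) e_k =
   x \<times> (g \<times> e_k) of x g^T - (g . x) I are lowest order Nedelec fields; hence dev D v is in Y^0.
   At the vertex a_1 we have g . (a_1 - a_0) = -1, so dev D v does not vanish there.
   Both spaces consist of restrictions to T of affine matrix fields, hence are finite-dimensional,
   and two finite-dimensional spaces sharing a nonzero vector satisfy dim (A + B) < dim A + dim B. *)

interpretation fun_vs: vector_space "fscale :: real \<Rightarrow> ('a \<Rightarrow> 'b::real_vector) \<Rightarrow> _"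
  by unfold_locales (auto simp: fscale_def fun_eq_iff scaleR_add_right scaleR_add_left)

lemma (in vector_space) dim_sum_less_if_common_nonzero:
  assumes "A \<subseteq> span G" "B \<subseteq> span G" "finite G" "z \<in> A" "z \<in> B" "z \<noteq> 0"
  shows "dim {x + y | x y. x \<in> A \<and> y \<in> B} < dim A + dim B"
proof -
  have "independent {z}" using \<open>z \<noteq> 0\<close> by simp
  then obtain BA BB where BA: "z \<in> BA" "BA \<subseteq> A" "independent BA" "A \<subseteq> span BA"
    and BB: "z \<in> BB" "BB \<subseteq> B" "independent BB" "B \<subseteq> span BB"
    using maximal_independent_subset_extend[of "{z}" A] maximal_independent_subset_extend[of "{z}" B]
      \<open>z \<in> A\<close> \<open>z \<in> B\<close> by (metis empty_subsetI insert_subset)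
  have "finite BA" "finite BB"
    using independent_span_bound[OF \<open>finite G\<close>] BA BB assms(1,2) by (meson subset_trans)+
  have "{x + y | x y. x \<in> A \<and> y \<in> B} \<subseteq> span (BA \<union> BB)"
    using BA(4) BB(4) span_mono[of BA "BA \<union> BB"] span_mono[of BB "BA \<union> BB"]
    by (auto intro!: span_add)
  then have "dim {x + y | x y. x \<in> A \<and> y \<in> B} \<le> card (BA \<union> BB)"
    using dim_le_card \<open>finite BA\<close> \<open>finite BB\<close> by blast
  also have "\<dots> < card BA + card BB"
    using card_Un_Int[OF \<open>finite BA\<close> \<open>finite BB\<close>] BA(1) BB(1) \<open>finite BA\<close>
    by (metis IntI card_gt_0_iff empty_iff finite_Int less_add_same_cancel1)
  also have "\<dots> = dim A + dim B"
    using dim_unique[OF BA(2,4,3)] dim_unique[OF BB(2,4,3)] by simp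
  finally show ?thesis .
qed

lemma sum_fun_apply: "(\<Sum>i\<in>I. F i) x = (\<Sum>i\<in>I. F i x)"
  by (induction I rule: infinite_finite_induct) auto

definition affine_map :: "('a::real_vector \<Rightarrow> 'b::real_vector) \<Rightarrow> bool" where
  "affine_map F \<longleftrightarrow> linear (\<lambda>x. F x - F 0)"

lemma linear_imp_affine_map: "linear f \<Longrightarrow> affine_map f"
  by (simp add: affine_map_def linear_0)

lemma affine_map_const: "affine_map (\<lambda>x. c)"
  by (simp add: affine_map_def linear_zero)

lemma affine_map_add: "affine_map F \<Longrightarrow> affine_map G \<Longrightarrow> affine_map (\<lambda>x. F x + G x)"
  unfolding affine_map_def by (drule (1) linear_compose_add) (simp add: algebra_simps)

lemma affine_map_scaleR: "affine_map F \<Longrightarrow> affine_map (\<lambda>x. c *\<^sub>R F x)"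
  unfolding affine_map_def by (drule linear_compose_scale_right[of _ c]) (simp add: algebra_simps)

lemma affine_map_mult_left:
  "affine_map (F :: 'a::real_vector \<Rightarrow> real) \<Longrightarrow> affine_map (\<lambda>x. c * F x)"
  using affine_map_scaleR[of F c] by simp

lemma affine_map_compose: "linear g \<Longrightarrow> affine_map F \<Longrightarrow> affine_map (\<lambda>x. g (F x))"
  unfolding affine_map_def by (drule (1) linear_compose) (simp add: o_def linear_diff)

lemma affine_map_vec:
  fixes F :: "'a::real_vector \<Rightarrow> 'b::real_vector^'n"
  assumes "\<And>k. affine_map (\<lambda>x. F x $ k)"
  shows "affine_map F"
  using assms unfolding affine_map_def linear_iff by (simp add: vec_eq_iff)

lemma subspace_affine_maps: "fun_vs.subspace (Collect affine_map)"
  unfolding fun_vs.subspace_def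
  by (auto simp: fscale_def plus_fun_def zero_fun_def affine_map_const affine_map_add affine_map_scaleR)

lemma affine_map_has_derivative:
  fixes F :: "'a::euclidean_space \<Rightarrow> 'b::real_normed_vector"
  assumes "affine_map F"
  shows "(F has_derivative (\<lambda>h. F h - F 0)) (at x)"
  using has_derivative_add_const[OF linear_imp_has_derivative[OF assms[unfolded affine_map_def]], of "F 0"]
  by simp

lemma affine_map_eq_inner:
  fixes f :: "'a::euclidean_space \<Rightarrow> real"
  assumes "affine_map f"
  obtains g where "\<And>x. f x = f 0 + g \<bullet> x"
proof
  fix x
  have "f x - f 0 = x \<bullet> adjoint (\<lambda>x. f x - f 0) 1"
    using adjoint_works[OF assms[unfolded affine_map_def], of x 1] by simp
  then show "f x = f 0 + adjoint (\<lambda>x. f x - f 0) 1 \<bullet> x"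
    by (simp add: inner_commute)
qed

definition affine_generators :: "('a::euclidean_space \<Rightarrow> 'b::euclidean_space) set" where
  "affine_generators = (\<lambda>b x. b) ` Basis \<union> (\<lambda>(e, b) x. (x \<bullet> e) *\<^sub>R b) ` (Basis \<times> Basis)"

lemma finite_affine_generators: "finite affine_generators"
  by (simp add: affine_generators_def)

lemma scaleR_eq_sum_Basis:
  "c *\<^sub>R v = (\<Sum>b\<in>Basis. (v \<bullet> b) *\<^sub>R c *\<^sub>R b)" for v :: "'a::euclidean_space"
proof -
  have "c *\<^sub>R v = c *\<^sub>R (\<Sum>b\<in>Basis. (v \<bullet> b) *\<^sub>R b)"
    by (simp only: euclidean_representation)
  then show ?thesis
    by (simp only: scaleR_sum_right scaleR_left_commute[of c])
qed

lemma affine_map_in_span_generators: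
  fixes F :: "'a::euclidean_space \<Rightarrow> 'b::euclidean_space"
  assumes "affine_map F"
  shows "F \<in> fun_vs.span affine_generators"
proof -
  define L where "L x = F x - F 0" for x
  have lin: "linear L" using assms unfolding affine_map_def L_def .
  have expand: "F x = (\<Sum>b\<in>Basis. (F 0 \<bullet> b) *\<^sub>R b)
      + (\<Sum>e\<in>Basis. \<Sum>b\<in>Basis. (L e \<bullet> b) *\<^sub>R (x \<bullet> e) *\<^sub>R b)" for x
  proof -
    have "F x = F 0 + L (\<Sum>e\<in>Basis. (x \<bullet> e) *\<^sub>R e)"
      by (simp add: L_def euclidean_representation)
    also have "\<dots> = F 0 + (\<Sum>e\<in>Basis. (x \<bullet> e) *\<^sub>R L e)"
      by (simp only: linear_sum[OF lin] linear_scale[OF lin])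
    finally show ?thesis
      by (simp only: euclidean_representation scaleR_eq_sum_Basis[of "x \<bullet> e" "L e" for e])
  qed
  have "F = (\<Sum>b\<in>Basis. fscale (F 0 \<bullet> b) (\<lambda>x. b))
      + (\<Sum>e\<in>Basis. \<Sum>b\<in>Basis. fscale (L e \<bullet> b) (\<lambda>x. (x \<bullet> e) *\<^sub>R b))"
    by (rule ext, subst expand) (simp add: fscale_def sum_fun_apply)
  also have "\<dots> \<in> fun_vs.span affine_generators"
    by (intro fun_vs.span_add fun_vs.span_sum fun_vs.span_scale fun_vs.span_base)
      (auto simp: affine_generators_def)
  finally show ?thesis .
qed

lemma module_hom_onT: "module_hom fscale fscale (onT T)"
  by unfold_locales (auto simp: onT_def fscale_def fun_eq_iff)

lemma onT_affine_map_in_span: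
  assumes "affine_map F"
  shows "onT T F \<in> fun_vs.span (onT T ` affine_generators)"
  using affine_map_in_span_generators[OF assms] module_hom.span_image[OF module_hom_onT]
  by blast

definition has_affine_derivative :: "('a::real_normed_vector \<Rightarrow> real) \<Rightarrow> bool" where
  "has_affine_derivative p \<longleftrightarrow>
     (\<exists>D. (\<forall>x. (p has_derivative D x) (at x)) \<and> (\<forall>h. affine_map (\<lambda>x. D x h)))"

lemma subspace_has_affine_derivative:
  "fun_vs.subspace (Collect (has_affine_derivative :: ('a::real_normed_vector \<Rightarrow> real) \<Rightarrow> bool))"
  unfolding fun_vs.subspace_def
proof (intro conjI ballI allI)
  show "0 \<in> Collect has_affine_derivative"
    unfolding mem_Collect_eq has_affine_derivative_def zero_fun_def
    by (intro exI[of _ "\<lambda>x h. 0"] conjI allI has_derivative_const affine_map_const)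
next
  fix p q :: "'a \<Rightarrow> real"
  assume "p \<in> Collect has_affine_derivative" "q \<in> Collect has_affine_derivative"
  then obtain D E where "\<And>x. (p has_derivative D x) (at x)" "\<And>h. affine_map (\<lambda>x. D x h)"
    and "\<And>x. (q has_derivative E x) (at x)" "\<And>h. affine_map (\<lambda>x. E x h)"
    unfolding mem_Collect_eq has_affine_derivative_def by blast
  then show "p + q \<in> Collect has_affine_derivative"
    unfolding mem_Collect_eq has_affine_derivative_def plus_fun_def
    by (intro exI[of _ "\<lambda>x h. D x h + E x h"] conjI allI has_derivative_add affine_map_add)
next
  fix c and p :: "'a \<Rightarrow> real"
  assume "p \<in> Collect has_affine_derivative"
  then obtain D where "\<And>x. (p has_derivative D x) (at x)" "\<And>h. affine_map (\<lambda>x. D x h)"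
    unfolding mem_Collect_eq has_affine_derivative_def by blast
  then show "fscale c p \<in> Collect has_affine_derivative"
    unfolding mem_Collect_eq has_affine_derivative_def fscale_def real_scaleR_def
    by (intro exI[of _ "\<lambda>x h. c * D x h"] conjI allI has_derivative_mult_right
        affine_map_mult_left)
qed

lemma affine_map_mult_has_affine_derivative:
  fixes f g :: "'a::euclidean_space \<Rightarrow> real"
  assumes f: "affine_map f" and g: "affine_map g"
  shows "has_affine_derivative (\<lambda>x. f x * g x)"
  unfolding has_affine_derivative_def
proof (intro exI conjI allI)
  fix x
  show "((\<lambda>x. f x * g x) has_derivative
      (\<lambda>h. f x * (g h - g 0) + (f h - f 0) * g x)) (at x)"
    by (rule has_derivative_mult[OF affine_map_has_derivative[OF f] affine_map_has_derivative[OF g]])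
next
  fix h
  show "affine_map (\<lambda>x. f x * (g h - g 0) + (f h - f 0) * g x)"
    using affine_map_add[OF affine_map_scaleR[OF f, of "g h - g 0"] affine_map_scaleR[OF g, of "f h - f 0"]]
    by (simp add: mult.commute)
qed

lemma affine_map_Jac:
  assumes "\<And>i. has_affine_derivative (\<lambda>x. v x $ i)"
  shows "affine_map (Jac v)"
proof -
  obtain D where D: "\<And>i x. ((\<lambda>y. v y $ i) has_derivative D i x) (at x)"
    and D_affine: "\<And>i h. affine_map (\<lambda>x. D i x h)"
    using assms unfolding has_affine_derivative_def by metis
  have "Jac v = (\<lambda>x. \<chi> i j. D i x (axis j 1))"
    unfolding Jac_def by (simp add: frechet_derivative_at[OF D, symmetric])
  then show ?thesis
    by (simp add: affine_map_vec D_affine)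
qed

lemma trace_scaleR: "trace (c *\<^sub>R A) = c * trace (A :: real^'n^'n)"
  by (simp add: trace_def sum_distrib_left)

lemma linear_dev: "linear dev"
  by (rule linearI)
    (simp_all add: dev_def trace_add trace_scaleR add_divide_distrib scaleR_add_left algebra_simps)

lemma N0_cross3: "(\<lambda>p. c + cross3 p w) \<in> N0"
proof -
  have "(\<lambda>p. c + cross3 p w)
      = fscale (c$1) (\<lambda>p. vector [1, 0, 0]) + fscale (c$2) (\<lambda>p. vector [0, 1, 0])
        + fscale (c$3) (\<lambda>p. vector [0, 0, 1]) + fscale (w$1) (\<lambda>p. vector [0, p$3, - (p$2)])
        + fscale (w$2) (\<lambda>p. vector [- (p$3), 0, p$1]) + fscale (w$3) (\<lambda>p. vector [p$2, - (p$1), 0])"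
    by (rule ext) (simp add: fscale_def cross3_def vec_eq_iff forall_3 algebra_simps)
  also have "\<dots> \<in> N0"
    unfolding N0_def fspan_def by (intro fun_vs.span_add fun_vs.span_scale fun_vs.span_base) auto
  finally show ?thesis .
qed

lemma affine_map_N0:
  assumes "f \<in> N0"
  shows "affine_map f"
proof -
  have "{(\<lambda>p. vector [1, 0, 0]), (\<lambda>p. vector [0, 1, 0]), (\<lambda>p. vector [0, 0, 1]),
        (\<lambda>p. vector [0, p$3, - (p$2)]), (\<lambda>p. vector [- (p$3), 0, p$1]),
        (\<lambda>p. vector [p$2, - (p$1), 0])} \<subseteq> Collect (affine_map :: (real^3 \<Rightarrow> real^3) \<Rightarrow> bool)"
    by (auto intro!: affine_map_const linear_imp_affine_map linearI
        simp: vec_eq_iff forall_3 algebra_simps)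
  then have "N0 \<subseteq> Collect affine_map"
    unfolding N0_def fspan_def by (rule fun_vs.span_minimal[OF _ subspace_affine_maps])
  then show ?thesis
    using assms by blast
qed

lemma affine_map_Y0:
  assumes "Y \<in> Y0"
  shows "affine_map Y"
proof -
  obtain F g where Y: "Y = (\<lambda>x. F x + (g \<bullet> x) *\<^sub>R mat 1)" and "\<And>i. (\<lambda>x. F x $ i) \<in> N0"
    using assms unfolding Y0_def P1hom_def by blast
  then have "affine_map F"
    by (simp add: affine_map_vec affine_map_N0)
  moreover have "linear (\<lambda>x. (g \<bullet> x) *\<^sub>R (mat 1 :: real^3^3))"
    by (rule linearI) (simp_all add: inner_add_right scaleR_add_left)
  ultimately show ?thesis
    unfolding Y using affine_map_add linear_imp_affine_map by blast
qed

definition outer_prod :: "real^'m \<Rightarrow> real^'n \<Rightarrow> real^'n^'m" where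
  "outer_prod u v = (\<chi> i j. u $ i * v $ j)"

lemma dev_scaleR_mat1_add: "dev (c *\<^sub>R mat 1 + M) = dev M"
  by (simp add: dev_def trace_add trace_scaleR trace_I add_divide_distrib algebra_simps)

lemma dev_outer_prod_in_Y0: "(\<lambda>x. dev (outer_prod (x - p) g)) \<in> Y0"
proof -
  define F where "F x = (\<chi> k. (g \<bullet> p / 3) *\<^sub>R axis k 1 - p $ k *\<^sub>R g
      + cross3 x (cross3 g (axis k 1)))" for x :: "real^3"
  have "dev (outer_prod (x - p) g) = F x + (((2/3) *\<^sub>R g) \<bullet> x) *\<^sub>R mat 1" for x
    by (simp add: F_def dev_def outer_prod_def trace_def cross3_def mat_def axis_def vec_eq_iff
        forall_3 sum_3 inner_vec_def field_simps)
  moreover have "(\<lambda>x. F x $ k) \<in> N0" for k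
    unfolding F_def by (simp add: N0_cross3)
  ultimately show ?thesis
    unfolding Y0_def P1hom_def by blast
qed

lemma dev_outer_prod_nonzero:
  assumes "g \<bullet> u \<noteq> 0"
  shows "dev (outer_prod u (g :: real^3)) \<noteq> 0"
proof
  assume "dev (outer_prod u g) = 0"
  have "trace (outer_prod u g) = g \<bullet> u"
    by (simp add: trace_def outer_prod_def inner_vec_def mult.commute)
  then have "dev (outer_prod u g) $ k $ j = u $ k * g $ j - g \<bullet> u / 3 * (if k = j then 1 else 0)"
    for k j by (simp add: dev_def outer_prod_def mat_def)
  then have entry: "u $ k * g $ j = g \<bullet> u / 3 * (if k = j then 1 else 0)" for k j
    using \<open>dev (outer_prod u g) = 0\<close> by simp
  have "u $ 1 * g $ 1 = g \<bullet> u / 3" "u $ 2 * g $ 2 = g \<bullet> u / 3" "u $ 1 * g $ 2 = 0"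
    using entry[of 1 1] entry[of 2 2] entry[of 1 2] by simp_all
  then show False
    using assms by auto
qed

lemma Jac_affine_times_displacement:
  assumes f: "\<And>y. f y = c + g \<bullet> y"
  shows "Jac (\<lambda>y. f y *\<^sub>R (y - p)) x = f x *\<^sub>R mat 1 + outer_prod (x - p) g"
proof -
  have deriv: "((\<lambda>y. (f y *\<^sub>R (y - p)) $ k) has_derivative
      (\<lambda>h. f x * h $ k + g \<bullet> h * (x $ k - p $ k))) (at x)" for k
  proof -
    have "(f has_derivative (\<lambda>h. g \<bullet> h)) (at x)"
      unfolding f by (intro derivative_eq_intros) auto
    moreover have "((\<lambda>y. y $ k - p $ k) has_derivative (\<lambda>h. h $ k)) (at x)"
      using has_derivative_diff[OF bounded_linear_imp_has_derivative[OF bounded_linear_vec_nth]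
          has_derivative_const] by simp
    ultimately show ?thesis
      using has_derivative_mult by fastforce
  qed
  have Jac_eq: "Jac (\<lambda>y. f y *\<^sub>R (y - p)) x
      = (\<chi> k j. f x * axis j 1 $ k + g \<bullet> axis j 1 * (x $ k - p $ k))"
    unfolding Jac_def by (simp only: frechet_derivative_at[OF deriv, symmetric])
  show ?thesis
    unfolding Jac_eq inner_axis by (simp add: outer_prod_def mat_def vec_eq_iff axis_def algebra_simps)
qed

lemma bary_product_in_Eedge:
  assumes "i < 4" "j < 4" "i \<noteq> j"
  shows "(\<lambda>x. bary a i x * bary a j x) \<in> Eedge a"
proof -
  have "(\<lambda>x. bary a i x * bary a j x) \<in> {(\<lambda>x. bary a i x * bary a j x) | i j. i < j \<and> j < 4}"
  proof (cases "i < j")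
    case True
    then show ?thesis using assms(2) by blast
  next
    case False
    then show ?thesis using assms
      by (intro CollectI exI[of _ j] exI[of _ i]) (simp add: fun_eq_iff mult.commute)
  qed
  then show ?thesis
    unfolding Eedge_def fspan_def by (rule fun_vs.span_base)
qed

definition barycentric :: "(nat \<Rightarrow> real^3) \<Rightarrow> real^3 \<Rightarrow> (nat \<Rightarrow> real) \<Rightarrow> bool" where
  "barycentric a x u \<longleftrightarrow>
     (\<forall>j. j \<ge> 4 \<longrightarrow> u j = 0) \<and> (\<Sum>j<4. u j) = 1 \<and> (\<Sum>j<4. u j *\<^sub>R a j) = x"

lemma bary_def': "bary a i x = (THE u. barycentric a x u) i"
  by (simp add: bary_def barycentric_def)

locale tetrahedron =
  fixes a :: "nat \<Rightarrow> real^3"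
  assumes inj_vertices: "inj_on a {..<4}"
    and affine_independent_vertices: "\<not> affine_dependent (a ` {..<4})"
begin

lemma ex_barycentric: "\<exists>u. barycentric a x u"
proof -
  let ?S = "a ` {..<4}"
  have "aff_dim ?S = int DIM(real^3)"
    using aff_dim_affine_independent[OF affine_independent_vertices] card_image[OF inj_vertices]
    by simp
  then have "x \<in> affine hull ?S"
    using affine_hull_UNIV by blast
  then obtain w where w: "sum w ?S = 1" "(\<Sum>v\<in>?S. w v *\<^sub>R v) = x"
    using affine_hull_finite[of ?S] by auto
  have "barycentric a x (\<lambda>j. if j < 4 then w (a j) else 0)"
    using w sum.reindex[OF inj_vertices, of w] sum.reindex[OF inj_vertices, of "\<lambda>v. w v *\<^sub>R v"]
    by (simp add: barycentric_def)
  then show ?thesis by blast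
qed

lemma barycentric_unique:
  assumes u: "barycentric a x u" and u': "barycentric a x u'"
  shows "u = u'"
proof
  fix j
  let ?S = "a ` {..<4}"
  define d where "d v = u (inv_into {..<4} a v) - u' (inv_into {..<4} a v)" for v
  have d_vertex: "d (a j) = u j - u' j" if "j < 4" for j
    using that inj_vertices by (simp add: d_def inv_into_f_f)
  have "sum d ?S = 0" "(\<Sum>v\<in>?S. d v *\<^sub>R v) = 0"
    using u u' d_vertex
      sum.reindex[OF inj_vertices, of d] sum.reindex[OF inj_vertices, of "\<lambda>v. d v *\<^sub>R v"]
    by (simp_all add: barycentric_def sum_subtractf scaleR_diff_left)
  then have "\<forall>v\<in>?S. d v = 0"
    using affine_independent_vertices affine_dependent_explicit_finite[of ?S] by blast
  then show "u j = u' j"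
    using d_vertex u u' by (cases "j < 4") (auto simp: barycentric_def)
qed

lemma ex1_barycentric: "\<exists>!u. barycentric a x u"
  using ex_barycentric barycentric_unique by blast

lemma bary_eq: "barycentric a x u \<Longrightarrow> bary a i x = u i"
  using ex1_barycentric by (simp add: bary_def' the1_equality)

lemma barycentric_bary: "barycentric a x (\<lambda>i. bary a i x)"
  using ex1_barycentric bary_eq by (metis ext)

lemma bary_vertex:
  assumes "k < 4"
  shows "bary a i (a k) = (if i = k then 1 else 0)"
proof (rule bary_eq)
  have vertex: "(\<lambda>j. (if j = k then 1 else 0) *\<^sub>R a j) = (\<lambda>j. if j = k then a k else 0)"
    by auto
  show "barycentric a (a k) (\<lambda>i. if i = k then 1 else 0)"
    unfolding barycentric_def vertex using assms by simp
qed

lemma bary_add: "bary a i (x + y) = bary a i x + bary a i y - bary a i 0"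
proof (rule bary_eq)
  show "barycentric a (x + y) (\<lambda>i. bary a i x + bary a i y - bary a i 0)"
    using barycentric_bary[of x] barycentric_bary[of y] barycentric_bary[of 0]
    by (simp add: barycentric_def sum.distrib sum_subtractf scaleR_add_left scaleR_diff_left)
qed

lemma bary_scaleR: "bary a i (c *\<^sub>R x) = c * bary a i x + (1 - c) * bary a i 0"
proof (rule bary_eq)
  show "barycentric a (c *\<^sub>R x) (\<lambda>i. c * bary a i x + (1 - c) * bary a i 0)"
    using barycentric_bary[of x] barycentric_bary[of 0]
    by (simp add: barycentric_def sum.distrib scaleR_add_left
        flip: sum_distrib_left scaleR_scaleR scaleR_sum_right)
qed

lemma affine_map_bary: "affine_map (bary a i)"
  unfolding affine_map_def
  by (rule linearI) (simp_all add: bary_add bary_scaleR algebra_simps)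

lemma displacement_eq_sum_bary: "x - a i = (\<Sum>j<4. bary a j x *\<^sub>R (a j - a i))"
  using barycentric_bary[of x]
  by (simp add: barycentric_def scaleR_diff_right sum_subtractf flip: scaleR_sum_left)

lemma bary_times_displacement_in_Eedge:
  assumes "i < 4"
  shows "(\<lambda>x. bary a i x * (x $ k - a i $ k)) \<in> Eedge a"
proof -
  have "bary a i x * (x $ k - a i $ k)
      = (\<Sum>j\<in>{..<4} - {i}. ((a j - a i) $ k) * (bary a i x * bary a j x))" for x
  proof -
    have "bary a i x * (x $ k - a i $ k) = (\<Sum>j<4. ((a j - a i) $ k) * (bary a i x * bary a j x))"
      by (subst displacement_eq_sum_bary[of x i, THEN arg_cong[where f = "\<lambda>v. v $ k"], simplified])
        (simp add: sum_distrib_left algebra_simps)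
    then show ?thesis
      using assms by (simp add: sum.remove[of "{..<4}" i])
  qed
  then have "(\<lambda>x. bary a i x * (x $ k - a i $ k))
      = (\<Sum>j\<in>{..<4} - {i}. fscale ((a j - a i) $ k) (\<lambda>x. bary a i x * bary a j x))"
    by (simp add: fun_eq_iff fscale_def sum_fun_apply)
  also have "\<dots> \<in> Eedge a"
    using assms bary_product_in_Eedge unfolding Eedge_def fspan_def
    by (intro fun_vs.span_sum fun_vs.span_scale) auto
  finally show ?thesis .
qed

lemma Eedge_has_affine_derivative:
  assumes "p \<in> Eedge a"
  shows "has_affine_derivative p"
proof -
  have "{(\<lambda>x. bary a i x * bary a j x) | i j. i < j \<and> j < 4} \<subseteq> Collect has_affine_derivative"
    by (auto intro: affine_map_mult_has_affine_derivative affine_map_bary)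
  then have "Eedge a \<subseteq> Collect has_affine_derivative"
    unfolding Eedge_def fspan_def by (rule fun_vs.span_minimal[OF _ subspace_has_affine_derivative])
  then show ?thesis
    using assms by blast
qed

lemma affine_map_devDE:
  assumes "W \<in> devDE a"
  shows "affine_map W"
proof -
  obtain v where "W = (\<lambda>x. dev (Jac v x))" "\<And>i. (\<lambda>x. v x $ i) \<in> Eedge a"
    using assms unfolding devDE_def by blast
  then show ?thesis
    using affine_map_compose[OF linear_dev affine_map_Jac] Eedge_has_affine_derivative by simp
qed

lemma common_field_nonzero_at_vertex:
  obtains W where "W \<in> Y0" "W \<in> devDE a" "W (a 1) \<noteq> 0"
proof -
  obtain g where g: "\<And>y. bary a 0 y = bary a 0 0 + g \<bullet> y"
    using affine_map_eq_inner[OF affine_map_bary] by blast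
  define v where "v y = bary a 0 y *\<^sub>R (y - a 0)" for y
  define W where "W x = dev (Jac v x)" for x
  have W_eq: "W = (\<lambda>x. dev (outer_prod (x - a 0) g))"
    unfolding W_def v_def
    by (simp add: Jac_affine_times_displacement[OF g] dev_scaleR_mat1_add fun_eq_iff)
  have "W \<in> Y0"
    unfolding W_eq by (rule dev_outer_prod_in_Y0)
  moreover have "W \<in> devDE a"
  proof -
    have "(\<lambda>x. v x $ k) \<in> Eedge a" for k
      using bary_times_displacement_in_Eedge[of 0 k] by (simp add: v_def)
    then show ?thesis
      unfolding devDE_def W_def by blast
  qed
  moreover have "W (a 1) \<noteq> 0"
  proof -
    have "g \<bullet> (a 1 - a 0) = -1"
      using g[of "a 1"] g[of "a 0"] bary_vertex[of 1 0] bary_vertex[of 0 0]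
      by (simp add: inner_diff_right)
    then show ?thesis
      unfolding W_eq by (simp add: dev_outer_prod_nonzero)
  qed
  ultimately show ?thesis
    using that by blast
qed

end

theorem mainTheorem2:
  fixes a :: "nat \<Rightarrow> real^3" and T :: "(real^3) set"
  assumes "inj_on a {..<4}"
    and "\<not> affine_dependent (a ` {..<4})"
    and "T = convex hull (a ` {..<4})"
  shows "fdim (onT T ` Y0) + fdim (onT T ` devDE a)
           > fdim {Y + W | Y W. Y \<in> onT T ` Y0 \<and> W \<in> onT T ` devDE a}"
proof -
  interpret tetrahedron a
    using assms(1,2) by unfold_locales
  obtain W where W: "W \<in> Y0" "W \<in> devDE a" "W (a 1) \<noteq> 0"
    by (rule common_field_nonzero_at_vertex)
  have "a 1 \<in> T"
    unfolding assms(3) by (rule hull_inc) auto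
  then have "onT T W \<noteq> 0"
    using W(3) by (auto simp: onT_def fun_eq_iff)
  moreover have "onT T ` Y0 \<subseteq> fun_vs.span (onT T ` affine_generators)"
    using onT_affine_map_in_span affine_map_Y0 by blast
  moreover have "onT T ` devDE a \<subseteq> fun_vs.span (onT T ` affine_generators)"
    using onT_affine_map_in_span affine_map_devDE by blast
  ultimately show ?thesis
    unfolding fdim_def using W(1,2) finite_affine_generators
    by (intro fun_vs.dim_sum_less_if_common_nonzero[where z = "onT T W"
          and G = "onT T ` affine_generators"]) auto
qed

end
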